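(* Let $(\mathsf{E},\mathcal{F},\mu)$ be a probability space and let $P$ be a $\mu$-invariant Markov kernel on $\mathsf{E}$. Let $\Phi:\mathrm{L}^{2}(\mu)\to[0,\infty]$ satisfy, for all $f\in\mathrm{L}^{2}(\mu)$, $c>0$ and $n\in\mathbb{N}$, \[ \Phi(cf)=c^{2}\Phi(f),\qquad\Phi(P^{n}f)\le\Phi(f),\qquad\|f-\mu(f)\|_{2}^{2}\le a\,\Phi(f-\mu(f)), \] where $a:=\sup_{f\in\mathrm{L}_{0}^{2}(\mu)\setminus\{0\}}\|f\|_{2}^{2}/\Phi(f)\in(0,\infty)$. Suppose that $\beta:(0,\infty)\to[0,\infty)$ is decreasing with $\beta(s)\downarrow0$ as $s\to\infty$ and that for all $f\in\mathrm{L}_{0}^{2}(\mu)$ and all $s>0$, \[ \|f\|_{2}^{2}\le s\,\mathcal{E}(P^{*}P,f)+\beta(s)\Phi(f). \] Let $K(u):=u\beta(1/u)$ for $u>0$, $K(0):=0$, let $K^{*}(v):=\sup_{u\ge0}\{uv-K(u)\}$ for $v\ge0$, and let $F_{a}(x):=\int_{x}^{a}\frac{\mathrm{d}v}{K^{*}(v)}$ for $x\in(0,a]$. Then $F_{a}$ is continuous, convex and strictly decreasing with $F_{a}(x)\to\infty$ as $x\downarrow0$, so it has an inverse $F_{a}^{-1}:(0,\infty)\to(0,a)$, and for every $f\in\mathrm{L}_{0}^{2}(\mu)$ with $0<\Phi(f)<\infty$ and every $n\in\mathbb{N}$, \[ \|P^{n}f\|_{2}^{2}\le\Phi(f)\,F_{a}^{-1}(n).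 \]
   Context: $\mathrm{L}^{2}(\mu)$ is the real Hilbert space of square-integrable functions with inner product $\langle f,g\rangle=\int fg\,\mathrm{d}\mu$ and norm $\|\cdot\|_{2}$; $\mathrm{L}_{0}^{2}(\mu)=\{f\in\mathrm{L}^{2}(\mu):\mu(f)=0\}$. $P$ acts on functions by $Pf(x)=\int P(x,\mathrm{d}y)f(y)$, and $P^{*}$ is its adjoint in $\mathrm{L}^{2}(\mu)$. For a bounded operator $T$ on $\mathrm{L}^{2}(\mu)$, the Dirichlet form is $\mathcal{E}(T,f):=\langle(\mathrm{Id}-T)f,f\rangle$. $\mathbb{N}=\{1,2,\dots\}$. *)

theory Defs
  imports "HOL-Probability.Probability"
begin

definition L2 :: "'a measure \<Rightarrow> ('a \<Rightarrow> real) set" where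
  "L2 M = {f. f \<in> borel_measurable M \<and> integrable M (\<lambda>x. (f x)\<^sup>2)}"

definition inner_L2 :: "'a measure \<Rightarrow> ('a \<Rightarrow> real) \<Rightarrow> ('a \<Rightarrow> real) \<Rightarrow> real" where
  "inner_L2 M f g = (\<integral>x. f x * g x \<partial>M)"

definition norm2_L2 :: "'a measure \<Rightarrow> ('a \<Rightarrow> real) \<Rightarrow> real" where
  "norm2_L2 M f = inner_L2 M f f"

definition mean :: "'a measure \<Rightarrow> ('a \<Rightarrow> real) \<Rightarrow> real" where
  "mean M f = (\<integral>x. f x \<partial>M)"

definition L2_0 :: "'a measure \<Rightarrow> ('a \<Rightarrow> real) set" where
  "L2_0 M = {f \<in> L2 M. mean M f = 0}"

definition invariant_markov_kernel :: "'a measure \<Rightarrow> ('a \<Rightarrow> 'a measure) \<Rightarrow> bool" where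
  "invariant_markov_kernel M P \<longleftrightarrow> P \<in> M \<rightarrow>\<^sub>M prob_algebra M \<and> bind M P = M"

definition kop :: "('a \<Rightarrow> 'a measure) \<Rightarrow> ('a \<Rightarrow> real) \<Rightarrow> ('a \<Rightarrow> real)" where
  "kop P f = (\<lambda>x. \<integral>y. f y \<partial>(P x))"

definition is_L2_adjoint :: "'a measure \<Rightarrow> (('a \<Rightarrow> real) \<Rightarrow> ('a \<Rightarrow> real))
    \<Rightarrow> (('a \<Rightarrow> real) \<Rightarrow> ('a \<Rightarrow> real)) \<Rightarrow> bool" where
  "is_L2_adjoint M T Q \<longleftrightarrow>
     (\<forall>g \<in> L2 M. Q g \<in> L2 M \<and> (\<forall>f \<in> L2 M. inner_L2 M (Q g) f = inner_L2 M g (T f)))"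

definition dirichlet :: "'a measure \<Rightarrow> (('a \<Rightarrow> real) \<Rightarrow> ('a \<Rightarrow> real)) \<Rightarrow> ('a \<Rightarrow> real) \<Rightarrow> real" where
  "dirichlet M T f = inner_L2 M (\<lambda>x. f x - T f x) f"

definition Kfun :: "(real \<Rightarrow> real) \<Rightarrow> real \<Rightarrow> real" where
  "Kfun \<beta> u = (if u = 0 then 0 else u * \<beta> (1 / u))"

text \<open>Convex conjugate K*(v) = sup_{u>=0} (u v - K(u)), valued in [0,infinity]
  (the supremum is >= 0 because of u = 0).\<close>
definition Kstar :: "(real \<Rightarrow> real) \<Rightarrow> real \<Rightarrow> ennreal" where
  "Kstar \<beta> v = (SUP u \<in> {0..}. ennreal (u * v - Kfun \<beta> u))"

text \<open>F_a(x) = integral from x to a of dv / K*(v) (with 1/infinity = 0, 1/0 = infinity).\<close>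
definition Fa :: "(real \<Rightarrow> real) \<Rightarrow> real \<Rightarrow> real \<Rightarrow> ennreal" where
  "Fa \<beta> a x = (\<integral>\<^sup>+ v. indicator {x..a} v * inverse (Kstar \<beta> v) \<partial>lborel)"

end

theory Submission
  imports Defs
begin

(*
  Write x_k = ||P^k f||^2 / Phi(f). Because E(P^* P, g) = ||g||^2 - ||P g||^2 and Phi does not
  increase along the chain, the weak Poincare inequality for P^k f with s = 1/u bounds every term
  u x_k - K(u) of the supremum defining K^*(x_k), which gives K^*(x_k) <= x_k - x_(k+1). As 1/K^*
  is decreasing, F_a(x_(k+1)) - F_a(x_k) >= (x_k - x_(k+1)) / K^*(x_k) >= 1, hence F_a(x_n) >= n,
  and since x_0 <= a this says x_n <= F_a^-1(n).

  The analytic properties of F_a only use that 1/K^* is decreasing, finite (K^* > 0 because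
  beta -> 0) and positive on (0, a). For the latter, comparing the weak Poincare inequality with
  the definition of a shows that beta exceeds every v < a near 0, and v <= beta(s) gives
  K^*(v) <= v/s; near 0 this bound also makes F_a blow up logarithmically.
*)

lemma ennreal_inverse_antimono:
  fixes p q :: ennreal
  shows "p \<le> q \<Longrightarrow> inverse q \<le> inverse p"
  including ennreal.lifting by transfer (auto intro: ereal_inverse_antimono)

lemma borel_measurable_mono_ennreal:
  fixes f :: "real \<Rightarrow> ennreal"
  assumes "mono f"
  shows "f \<in> borel_measurable borel"
proof (rule borel_measurableI_less)
  fix y :: ennreal
  have "is_interval {x. f x < y}"
    unfolding is_interval_1 using assms by (auto dest: monoD intro: le_less_trans)
  then show "{x \<in> space borel. f x < y} \<in> sets borel"
    by (simp add: real_interval_borel_measurable)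
qed

lemma Kstar_mono: "mono (Kstar \<beta>)"
  unfolding Kstar_def
  by (intro monoI SUP_mono) (auto intro!: bexI ennreal_leI mult_left_mono)

lemma inverse_Kstar_antimono: "v \<le> w \<Longrightarrow> inverse (Kstar \<beta> w) \<le> inverse (Kstar \<beta> v)"
  by (intro ennreal_inverse_antimono monoD[OF Kstar_mono])

lemma inverse_Kstar_measurable [measurable]: "(\<lambda>v. inverse (Kstar \<beta> v)) \<in> borel_measurable borel"
  using borel_measurable_mono_ennreal[OF Kstar_mono] by measurable

lemma Kstar_le_of_bound:
  assumes "0 \<le> d" and bound: "\<And>s. 0 < s \<Longrightarrow> x \<le> s * d + \<beta> s"
  shows "Kstar \<beta> x \<le> ennreal d"
  unfolding Kstar_def
proof (intro SUP_least ennreal_leI)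
  fix u :: real assume "u \<in> {0..}"
  show "u * x - Kfun \<beta> u \<le> d"
  proof (cases "u = 0")
    case False
    with \<open>u \<in> {0..}\<close> have "0 < u" by simp
    then have "u * x \<le> u * (1 / u * d + \<beta> (1 / u))"
      using bound[of "1 / u"] by (intro mult_left_mono) auto
    with \<open>0 < u\<close> show ?thesis by (simp add: Kfun_def algebra_simps)
  qed (simp add: Kfun_def \<open>0 \<le> d\<close>)
qed

lemma Fa_split:
  assumes "x \<le> y" "y \<le> b"
  shows "Fa \<beta> b x = Fa \<beta> y x + Fa \<beta> b y"
proof -
  have "AE v in lborel. indicator {x..b} v * inverse (Kstar \<beta> v)
      = indicator {x..y} v * inverse (Kstar \<beta> v) + indicator {y..b} v * inverse (Kstar \<beta> v)"
    using AE_lborel_singleton[of y] by eventually_elim (use assms in \<open>auto simp: indicator_def\<close>)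
  then show ?thesis
    unfolding Fa_def by (simp add: nn_integral_cong_AE nn_integral_add)
qed

lemma Fa_bounds:
  assumes "x \<le> y"
  shows "ennreal (y - x) * inverse (Kstar \<beta> y) \<le> Fa \<beta> y x"
    and "Fa \<beta> y x \<le> ennreal (y - x) * inverse (Kstar \<beta> x)"
proof -
  have const: "(\<integral>\<^sup>+v. indicator {x..y} v * c \<partial>lborel) = ennreal (y - x) * c" for c :: ennreal
    using assms by (simp add: nn_integral_cmult_indicator mult.commute)
  show "ennreal (y - x) * inverse (Kstar \<beta> y) \<le> Fa \<beta> y x"
    unfolding Fa_def const[symmetric]
    by (intro nn_integral_mono) (auto simp: indicator_def intro: inverse_Kstar_antimono)
  show "Fa \<beta> y x \<le> ennreal (y - x) * inverse (Kstar \<beta> x)"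
    unfolding Fa_def const[symmetric]
    by (intro nn_integral_mono) (auto simp: indicator_def intro: inverse_Kstar_antimono)
qed

lemma Fa_self: "Fa \<beta> x x = 0"
  using Fa_bounds(2)[of x x] by simp

locale rate_function =
  fixes \<beta> :: "real \<Rightarrow> real"
  assumes nonneg: "\<And>s. 0 < s \<Longrightarrow> 0 \<le> \<beta> s"
    and antimono: "\<And>s t. 0 < s \<Longrightarrow> s \<le> t \<Longrightarrow> \<beta> t \<le> \<beta> s"
    and tendsto_zero: "(\<beta> \<longlongrightarrow> 0) at_top"
begin

abbreviation F :: "real \<Rightarrow> real \<Rightarrow> real" where
  "F b x \<equiv> enn2real (Fa \<beta> b x)"

abbreviation inv_Kstar :: "real \<Rightarrow> real" where
  "inv_Kstar v \<equiv> enn2real (inverse (Kstar \<beta> v))"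

lemma Kstar_pos:
  assumes "0 < v"
  shows "0 < Kstar \<beta> v"
proof -
  obtain s where s: "1 \<le> s" "\<beta> s < v"
    using eventually_conj[OF eventually_ge_at_top order_tendstoD(2)[OF tendsto_zero \<open>0 < v\<close>]]
    by (auto simp: eventually_at_top_linorder)
  have "0 < ennreal (1 / s * v - Kfun \<beta> (1 / s))"
    using s by (simp add: Kfun_def field_simps)
  also have "\<dots> \<le> Kstar \<beta> v"
    unfolding Kstar_def using s by (intro SUP_upper) auto
  finally show ?thesis .
qed

lemma inverse_Kstar_less_top: "0 < v \<Longrightarrow> inverse (Kstar \<beta> v) < \<top>"
  using Kstar_pos[of v] by (simp add: top.not_eq_extremum[symmetric])

lemma Kstar_le_divide:
  assumes "0 < s" "0 \<le> v" "v \<le> \<beta> s"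
  shows "Kstar \<beta> v \<le> ennreal (v / s)"
proof (rule Kstar_le_of_bound)
  fix t :: real assume "0 < t"
  show "v \<le> t * (v / s) + \<beta> t"
  proof (cases "s \<le> t")
    case True
    then have "v \<le> t * (v / s)"
      using assms by (simp add: field_simps mult_right_mono)
    with nonneg[OF \<open>0 < t\<close>] show ?thesis by linarith
  next
    case False
    then have "v \<le> \<beta> t"
      using assms antimono[OF \<open>0 < t\<close>, of s] by linarith
    with assms \<open>0 < t\<close> show ?thesis by (simp add: add_increasing)
  qed
qed (use assms in simp)

lemma Fa_less_top:
  assumes "0 < x"
  shows "Fa \<beta> b x < \<top>"
proof (cases "x \<le> b")
  case True
  have "Fa \<beta> b x \<le> ennreal (b - x) * inverse (Kstar \<beta> x)"
    by (rule Fa_bounds(2)[OF True])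
  also have "\<dots> < \<top>"
    using inverse_Kstar_less_top[OF assms] by (simp add: ennreal_mult_less_top)
  finally show ?thesis .
qed (simp add: Fa_def)

lemma F_split: "0 < x \<Longrightarrow> x \<le> y \<Longrightarrow> y \<le> b \<Longrightarrow> F b x = F y x + F b y"
  using Fa_split[of x y b] Fa_less_top[of x] Fa_less_top[of y] by (simp add: enn2real_plus)

lemma F_diff_bounds:
  assumes "0 < x" "x \<le> y" "y \<le> b"
  shows "(y - x) * inv_Kstar y \<le> F b x - F b y"
    and "F b x - F b y \<le> (y - x) * inv_Kstar x"
proof -
  have diff: "F b x - F b y = F y x"
    using F_split[OF assms] by simp
  have "ennreal (y - x) * inverse (Kstar \<beta> x) < \<top>"
    using inverse_Kstar_less_top[OF assms(1)] by (simp add: ennreal_mult_less_top)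
  from enn2real_mono[OF Fa_bounds(2)[OF assms(2)] this]
  show "F b x - F b y \<le> (y - x) * inv_Kstar x"
    unfolding diff using assms by (simp add: enn2real_mult)
  from enn2real_mono[OF Fa_bounds(1)[OF assms(2)] Fa_less_top[OF assms(1)]]
  show "(y - x) * inv_Kstar y \<le> F b x - F b y"
    unfolding diff using assms by (simp add: enn2real_mult)
qed

lemma F_antimono:
  assumes "0 < x" "x \<le> y" "y \<le> b"
  shows "F b y \<le> F b x"
proof -
  have "0 \<le> (y - x) * inv_Kstar y"
    using assms by simp
  with F_diff_bounds(1)[OF assms] show ?thesis by linarith
qed

lemma F_lipschitz:
  assumes "0 < c"
  shows "(inv_Kstar c)-lipschitz_on {c..b} (F b)"
proof (rule lipschitz_onI)
  have le: "F b x - F b y \<le> inv_Kstar c * (y - x)" if "c \<le> x" "x \<le> y" "y \<le> b" for x y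
  proof -
    have "F b x - F b y \<le> (y - x) * inv_Kstar x"
      using F_diff_bounds(2)[of x y b] that assms by simp
    also have "\<dots> \<le> (y - x) * inv_Kstar c"
      using that assms inverse_Kstar_less_top[OF assms]
      by (intro mult_left_mono enn2real_mono inverse_Kstar_antimono) auto
    finally show ?thesis by (simp add: mult.commute)
  qed
  fix x y assume "x \<in> {c..b}" "y \<in> {c..b}"
  with le[of x y] le[of y x] F_antimono[of x y b] F_antimono[of y x b] assms
  show "dist (F b x) (F b y) \<le> inv_Kstar c * dist x y"
    by (cases "x \<le> y") (auto simp: dist_real_def abs_if)
qed (simp add: enn2real_nonneg)

lemma F_continuous_on: "continuous_on {0<..b} (F b)"
proof (rule continuous_on_eq_continuous_within[THEN iffD2, rule_format])
  fix x assume x: "x \<in> {0<..b}"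
  have "continuous_on {x / 2..b} (F b)"
    using lipschitz_on_continuous_on[OF F_lipschitz] x by simp
  then have "continuous (at x within {x / 2..b}) (F b)"
    using x by (simp add: continuous_on_eq_continuous_within)
  moreover have "at x within {0<..b} = at x within {x / 2..b}"
    using x by (intro at_within_nhd[of _ "{x / 2<..}"]) auto
  ultimately show "continuous (at x within {0<..b}) (F b)"
    by simp
qed

lemma F_convex_on: "convex_on {0<..b} (F b)"
proof (rule pos_convex_function)
  fix x y assume x: "x \<in> {0<..b}" and y: "y \<in> {0<..b}"
  show "- inv_Kstar x * (y - x) \<le> F b y - F b x"
  proof (cases "x \<le> y")
    case True
    then show ?thesis using F_diff_bounds(2)[of x y b] x y by (simp add: algebra_simps)
  next
    case False
    then show ?thesis using F_diff_bounds(1)[of y x b] x y by (simp add: algebra_simps)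
  qed
qed simp

lemma Fa_ge_log:
  assumes s: "0 < s" and x: "0 < x" "x \<le> c" and c: "c \<le> \<beta> s"
  shows "ennreal (s * (ln c - ln x)) \<le> Fa \<beta> c x"
proof -
  have "(\<integral>\<^sup>+v. ennreal (s / v) * indicator {x..c} v \<partial>lborel) = ennreal (s * ln c - s * ln x)"
    by (rule nn_integral_FTC_Icc) (use x s in \<open>auto intro!: derivative_eq_intros simp: field_simps\<close>)
  then have "ennreal (s * (ln c - ln x)) = (\<integral>\<^sup>+v. ennreal (s / v) * indicator {x..c} v \<partial>lborel)"
    by (simp add: right_diff_distrib)
  also have "\<dots> \<le> Fa \<beta> c x"
    unfolding Fa_def
  proof (intro nn_integral_mono)
    fix v
    show "ennreal (s / v) * indicator {x..c} v \<le> indicator {x..c} v * inverse (Kstar \<beta> v)"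
    proof (cases "v \<in> {x..c}")
      case True
      then have "Kstar \<beta> v \<le> ennreal (v / s)"
        using x s c by (intro Kstar_le_divide) auto
      from ennreal_inverse_antimono[OF this] True x s show ?thesis
        by (simp add: inverse_ennreal)
    qed simp
  qed
  finally show ?thesis .
qed

lemma F_step:
  assumes "0 < w" "w \<le> v" "v \<le> b" and decrement: "Kstar \<beta> v \<le> ennreal (v - w)"
  shows "F b v + 1 \<le> F b w"
proof -
  have "0 < ennreal (v - w)"
    using Kstar_pos[of v] assms by (meson less_le_trans)
  then have "0 < v - w" by (simp add: ennreal_less_zero_iff)
  then have "1 = ennreal (v - w) * inverse (ennreal (v - w))"
    by (simp add: inverse_ennreal ennreal_mult[symmetric])
  also have "\<dots> \<le> ennreal (v - w) * inverse (Kstar \<beta> v)"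
    using decrement by (intro mult_left_mono ennreal_inverse_antimono) auto
  also have "\<dots> \<le> Fa \<beta> v w"
    by (rule Fa_bounds(1)[OF \<open>w \<le> v\<close>])
  finally have "1 \<le> F v w"
    using Fa_less_top[OF \<open>0 < w\<close>] by (auto dest: enn2real_mono)
  then show ?thesis using F_split[OF assms(1-3)] by simp
qed

end

locale rate_function_level = rate_function +
  fixes a :: real
  assumes level_pos: "0 < a"
    and below_level: "\<And>v. 0 < v \<Longrightarrow> v < a \<Longrightarrow> \<exists>s>0. v \<le> \<beta> s"
begin

lemma inv_Kstar_pos:
  assumes "0 < v" "v < a"
  shows "0 < inv_Kstar v"
proof -
  obtain s where "0 < s" "v \<le> \<beta> s"
    using below_level[OF assms] by blast
  then have "Kstar \<beta> v < \<top>"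
    using Kstar_le_divide[of s v] assms by (simp add: le_less_trans)
  then show ?thesis
    using inverse_Kstar_less_top[OF assms(1)] by (simp add: enn2real_positive_iff ennreal_inverse_positive)
qed

lemma F_strict_antimono:
  assumes "0 < x" "x < y" "y \<le> a"
  shows "F a y < F a x"
proof -
  define m where "m = (x + y) / 2"
  have m: "x < m" "m < y"
    using assms by (simp_all add: m_def)
  have "0 < (m - x) * inv_Kstar m"
    using m assms inv_Kstar_pos[of m] by simp
  also have "\<dots> \<le> F a x - F a m"
    using F_diff_bounds(1)[of x m a] m assms by simp
  finally show ?thesis
    using F_antimono[of m y a] m assms by simp
qed

lemma inj_on_F: "inj_on (F a) {0<..a}"
  by (rule inj_onI) (metis F_strict_antimono greaterThanAtMost_iff less_irrefl linorder_cases)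

lemma Fa_tendsto_top: "((Fa \<beta> a) \<longlongrightarrow> \<top>) (at_right 0)"
proof (rule order_tendstoI)
  fix r :: ennreal assume "r < \<top>"
  then obtain t where r: "r = ennreal t" and "0 \<le> t"
    by (cases r) auto
  obtain s where s: "0 < s" "a / 2 \<le> \<beta> s"
    using below_level[of "a / 2"] level_pos by auto
  have log_bound: "ennreal (s * (ln (a / 2) - ln x)) \<le> Fa \<beta> a x" if x: "0 < x" "x \<le> a / 2" for x
    using Fa_ge_log[OF s(1) x s(2)] Fa_split[of x "a / 2" a] x level_pos
    by (simp add: order_trans)
  have "\<forall>\<^sub>F x in at_right 0. ln x \<le> ln (a / 2) - (t + 1) / s"
    using ln_at_0 by (simp add: filterlim_at_bot)
  moreover have "\<forall>\<^sub>F x in at_right 0. 0 < x \<and> x \<le> a / 2"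
    using level_pos by (auto simp: eventually_at_right_field intro!: exI[of _ "a / 2"])
  ultimately show "\<forall>\<^sub>F x in at_right 0. r < Fa \<beta> a x"
  proof eventually_elim
    case (elim x)
    then have "t < s * (ln (a / 2) - ln x)"
      using s by (simp add: field_simps)
    then have "r < ennreal (s * (ln (a / 2) - ln x))"
      using r \<open>0 \<le> t\<close> by (simp add: ennreal_less_iff)
    also have "\<dots> \<le> Fa \<beta> a x"
      using log_bound elim by simp
    finally show ?case .
  qed
qed simp

lemma F_surj:
  assumes "0 \<le> t"
  shows "\<exists>x\<in>{0<..a}. F a x = t"
proof -
  obtain d where d: "0 < d" "\<And>x. 0 < x \<Longrightarrow> x < d \<Longrightarrow> ennreal t < Fa \<beta> a x"
    using order_tendstoD(1)[OF Fa_tendsto_top, of "ennreal t"] by (auto simp: eventually_at_right_field)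
  define c where "c = min d a / 2"
  have c: "0 < c" "c < a" "ennreal t < Fa \<beta> a c"
    using d level_pos by (auto simp: c_def)
  then have "t < F a c"
    using Fa_less_top[of c a] assms by (cases "Fa \<beta> a c") (auto simp: ennreal_less_iff)
  moreover have "continuous_on {c..a} (F a)"
    using F_continuous_on by (rule continuous_on_subset) (use c in auto)
  ultimately obtain x where "c \<le> x" "x \<le> a" "F a x = t"
    using IVT2'[of "F a" a t c] c assms Fa_self by auto
  then show ?thesis using c by auto
qed

lemma the_inv_F:
  assumes "0 \<le> t"
  shows "the_inv_into {0<..a} (F a) t \<in> {0<..a}" and "F a (the_inv_into {0<..a} (F a) t) = t"
proof -
  obtain x where x: "x \<in> {0<..a}" "F a x = t"
    using F_surj[OF assms] by blast
  then have "the_inv_into {0<..a} (F a) t = x"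
    using the_inv_into_f_f[OF inj_on_F x(1)] by simp
  with x show "the_inv_into {0<..a} (F a) t \<in> {0<..a}" "F a (the_inv_into {0<..a} (F a) t) = t"
    by simp_all
qed

lemma F_unique_preimage:
  assumes "0 < t"
  shows "\<exists>!x\<in>{0<..<a}. F a x = t"
proof -
  obtain x where x: "x \<in> {0<..a}" "F a x = t"
    using F_surj[OF less_imp_le[OF assms]] by blast
  with assms Fa_self have "x \<in> {0<..<a}"
    by (cases "x = a") auto
  with x inj_on_F show ?thesis
    by (auto simp: inj_on_def)
qed

lemma le_the_inv_F:
  assumes "0 < x" "x \<le> a" "0 \<le> t" "t \<le> F a x"
  shows "x \<le> the_inv_into {0<..a} (F a) t"
  using the_inv_F[OF assms(3)] F_strict_antimono[of "the_inv_into {0<..a} (F a) t" x] assms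
  by force

lemma decay_le_the_inv_F:
  fixes x :: "nat \<Rightarrow> real"
  assumes nonneg: "\<And>k. 0 \<le> x k" and start: "x 0 \<le> a"
    and decr: "\<And>k. x (Suc k) \<le> x k"
    and decrement: "\<And>k. Kstar \<beta> (x k) \<le> ennreal (x k - x (Suc k))"
  shows "x n \<le> the_inv_into {0<..a} (F a) (real n)"
proof -
  have below: "x k \<le> a" for k
    by (induction k) (use start decr order_trans in blast)+
  have progress: "x k = 0 \<or> (0 < x k \<and> real k \<le> F a (x k))" for k
  proof (induction k)
    case 0
    then show ?case using nonneg[of 0] by (auto simp: less_le)
  next
    case (Suc k)
    show ?case
    proof (cases "x (Suc k) = 0")
      case False
      then have "0 < x (Suc k)"
        using nonneg[of "Suc k"] by simp
      with F_step[OF this decr below decrement] Suc.IH decr[of k] show ?thesis by auto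
    qed simp
  qed
  from progress[of n] show ?thesis
  proof
    assume "x n = 0"
    then show ?thesis using the_inv_F(1)[of "real n"] by simp
  next
    assume "0 < x n \<and> real n \<le> F a (x n)"
    then show ?thesis using le_the_inv_F below by simp
  qed
qed

end

lemma norm2_L2_eq: "norm2_L2 M f = (\<integral>x. (f x)\<^sup>2 \<partial>M)"
  by (simp add: norm2_L2_def inner_L2_def power2_eq_square)

lemma norm2_L2_nonneg: "0 \<le> norm2_L2 M f"
  by (simp add: norm2_L2_eq)

lemma integrable_mult_L2:
  assumes "f \<in> L2 M" "g \<in> L2 M"
  shows "integrable M (\<lambda>x. f x * g x)"
proof (rule Bochner_Integration.integrable_bound)
  show "integrable M (\<lambda>x. (f x)\<^sup>2 + (g x)\<^sup>2)"
    using assms unfolding L2_def by auto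
  have "\<bar>u * v\<bar> \<le> u\<^sup>2 + v\<^sup>2" for u v :: real
  proof -
    have "2 * \<bar>u\<bar> * \<bar>v\<bar> \<le> u\<^sup>2 + v\<^sup>2" "0 \<le> \<bar>u\<bar> * \<bar>v\<bar>"
      using sum_squares_bound[of "\<bar>u\<bar>" "\<bar>v\<bar>"] by simp_all
    then show ?thesis unfolding abs_mult by linarith
  qed
  then show "AE x in M. norm (f x * g x) \<le> norm ((f x)\<^sup>2 + (g x)\<^sup>2)"
    by simp
qed (use assms in \<open>auto simp: L2_def\<close>)

lemma square_integral_le:
  fixes f :: "'a \<Rightarrow> real"
  assumes "prob_space N" "integrable N f" "integrable N (\<lambda>x. (f x)\<^sup>2)"
  shows "(integral\<^sup>L N f)\<^sup>2 \<le> (\<integral>x. (f x)\<^sup>2 \<partial>N)"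
  using prob_space.variance_eq[OF assms] prob_space.variance_positive[OF assms(1), of f] by simp

locale invariant_kernel =
  fixes M :: "'a measure" and P :: "'a \<Rightarrow> 'a measure"
  assumes prob_M: "prob_space M" and invariant: "invariant_markov_kernel M P"
begin

lemma L2_integrable: "f \<in> L2 M \<Longrightarrow> integrable M f"
  using prob_space.finite_measure[OF prob_M]
  unfolding L2_def by (auto intro: finite_measure.square_integrable_imp_integrable)

lemma kernel_prob_algebra: "P \<in> M \<rightarrow>\<^sub>M prob_algebra M"
  using invariant unfolding invariant_markov_kernel_def by simp

lemma kernel_measurable: "P \<in> M \<rightarrow>\<^sub>M subprob_algebra M"
  using kernel_prob_algebra by (rule measurable_prob_algebraD)

lemma prob_space_kernel: "x \<in> space M \<Longrightarrow> prob_space (P x)"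
  using measurable_space[OF kernel_prob_algebra] by (simp add: space_prob_algebra)

lemma borel_measurable_kernel: "x \<in> space M \<Longrightarrow> f \<in> borel_measurable M \<Longrightarrow> f \<in> borel_measurable (P x)"
  using sets_kernel[OF kernel_measurable] by (simp cong: measurable_cong_sets)

lemma kop_measurable: "f \<in> borel_measurable M \<Longrightarrow> kop P f \<in> borel_measurable M"
  unfolding kop_def by (rule measurable_compose[OF kernel_measurable integral_measurable_subprob_algebra])

lemma kop_integrable_nonneg:
  assumes h: "integrable M h" and nonneg: "\<And>x. 0 \<le> h x"
  shows "AE x in M. integrable (P x) h"
    and "integrable M (kop P h)"
    and "integral\<^sup>L M (kop P h) = integral\<^sup>L M h"
proof -
  have hm: "h \<in> borel_measurable M" using h by simp
  have inner_measurable: "(\<lambda>x. \<integral>\<^sup>+y. ennreal (h y) \<partial>P x) \<in> borel_measurable M"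
    using hm by (intro measurable_compose[OF kernel_measurable nn_integral_measurable_subprob_algebra]) simp
  have "(\<integral>\<^sup>+x. \<integral>\<^sup>+y. ennreal (h y) \<partial>P x \<partial>M) = (\<integral>\<^sup>+x. ennreal (h x) \<partial>bind M P)"
    using hm by (simp add: nn_integral_bind[OF _ kernel_measurable])
  also have "\<dots> = ennreal (integral\<^sup>L M h)"
    using invariant h nonneg unfolding invariant_markov_kernel_def by (simp add: nn_integral_eq_integral)
  finally have total: "(\<integral>\<^sup>+x. \<integral>\<^sup>+y. ennreal (h y) \<partial>P x \<partial>M) = ennreal (integral\<^sup>L M h)" .
  have "AE x in M. (\<integral>\<^sup>+y. ennreal (h y) \<partial>P x) \<noteq> \<infinity>"
    by (rule nn_integral_PInf_AE[OF inner_measurable]) (simp add: total)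
  moreover have "AE x in M. x \<in> space M"
    by (rule AE_space)
  ultimately have ae: "AE x in M. integrable (P x) h \<and> (\<integral>\<^sup>+y. ennreal (h y) \<partial>P x) = ennreal (kop P h x)"
  proof eventually_elim
    case (elim x)
    then have "integrable (P x) h"
      using nonneg borel_measurable_kernel[OF _ hm] by (intro integrableI_bounded) (auto simp: top.not_eq_extremum)
    then show ?case
      unfolding kop_def using nonneg by (simp add: nn_integral_eq_integral)
  qed
  then show "AE x in M. integrable (P x) h"
    by eventually_elim simp
  have kop_nonneg: "0 \<le> kop P h x" for x
    unfolding kop_def using nonneg by (simp add: Bochner_Integration.integral_nonneg)
  have kop_nn_integral: "(\<integral>\<^sup>+x. ennreal (kop P h x) \<partial>M) = ennreal (integral\<^sup>L M h)"
    using total ae by (subst nn_integral_cong_AE[where v = "\<lambda>x. \<integral>\<^sup>+y. ennreal (h y) \<partial>P x"]) auto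
  show kop_integrable: "integrable M (kop P h)"
    using kop_nn_integral kop_nonneg kop_measurable[OF hm] by (intro integrableI_nonneg) auto
  show "integral\<^sup>L M (kop P h) = integral\<^sup>L M h"
    using integral_eq_nn_integral[OF kop_measurable[OF hm]] kop_nn_integral kop_nonneg nonneg
    by (simp add: Bochner_Integration.integral_nonneg)
qed

lemma kop_integrable:
  assumes f: "integrable M f"
  shows "AE x in M. integrable (P x) f"
    and "integrable M (kop P f)"
    and "integral\<^sup>L M (kop P f) = integral\<^sup>L M f"
proof -
  define fp where "fp = (\<lambda>x. max 0 (f x))"
  define fn where "fn = (\<lambda>x. max 0 (- f x))"
  have parts: "integrable M fp" "\<And>x. 0 \<le> fp x" "integrable M fn" "\<And>x. 0 \<le> fn x"
    using f by (auto simp: fp_def fn_def)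
  have f_eq: "f = (\<lambda>x. fp x - fn x)"
    by (auto simp: fp_def fn_def)
  note pos = kop_integrable_nonneg[OF parts(1,2)] and neg = kop_integrable_nonneg[OF parts(3,4)]
  show "AE x in M. integrable (P x) f"
    using pos(1) neg(1) by eventually_elim (simp add: f_eq)
  then have ae: "AE x in M. kop P fp x - kop P fn x = kop P f x"
    using pos(1) neg(1) by eventually_elim (simp add: kop_def f_eq)
  have kop_f: "kop P f \<in> borel_measurable M"
    using f by (simp add: kop_measurable)
  show "integrable M (kop P f)"
    by (rule integrable_cong_AE_imp[OF _ kop_f ae]) (use pos(2) neg(2) in simp)
  have "integral\<^sup>L M (kop P f) = integral\<^sup>L M (\<lambda>x. kop P fp x - kop P fn x)"
    using ae kop_f pos(2) neg(2) by (intro integral_cong_AE) (auto simp: eq_commute)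
  also have "\<dots> = integral\<^sup>L M fp - integral\<^sup>L M fn"
    using pos(2,3) neg(2,3) by simp
  also have "\<dots> = integral\<^sup>L M f"
    using parts(1,3) by (simp add: f_eq)
  finally show "integral\<^sup>L M (kop P f) = integral\<^sup>L M f" .
qed

lemma kop_square_le:
  assumes f: "f \<in> L2 M"
  shows "AE x in M. (kop P f x)\<^sup>2 \<le> kop P (\<lambda>y. (f y)\<^sup>2) x"
proof -
  have "integrable M f" "integrable M (\<lambda>y. (f y)\<^sup>2)"
    using f L2_integrable[OF f] by (simp_all add: L2_def)
  from this[THEN kop_integrable(1)] AE_space
  show ?thesis
  proof eventually_elim
    case (elim x)
    from square_integral_le[OF prob_space_kernel[OF elim(3)] elim(1,2)] show ?case
      by (simp add: kop_def)
  qed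
qed

lemma kop_L2:
  assumes f: "f \<in> L2 M"
  shows "kop P f \<in> L2 M"
    and "norm2_L2 M (kop P f) \<le> norm2_L2 M f"
proof -
  have f2: "integrable M (\<lambda>y. (f y)\<^sup>2)"
    using f by (simp add: L2_def)
  have Pf_measurable: "kop P f \<in> borel_measurable M"
    using f by (simp add: L2_def kop_measurable)
  note square_le = kop_square_le[OF f] and Pf2 = kop_integrable(2,3)[OF f2]
  have Pf_square: "integrable M (\<lambda>x. (kop P f x)\<^sup>2)"
  proof (rule Bochner_Integration.integrable_bound[OF Pf2(1)])
    show "AE x in M. norm ((kop P f x)\<^sup>2) \<le> norm (kop P (\<lambda>y. (f y)\<^sup>2) x)"
      using square_le by eventually_elim simp
  qed (use Pf_measurable in simp)
  with Pf_measurable show "kop P f \<in> L2 M"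
    by (simp add: L2_def)
  have "norm2_L2 M (kop P f) \<le> integral\<^sup>L M (kop P (\<lambda>y. (f y)\<^sup>2))"
    unfolding norm2_L2_eq by (rule integral_mono_AE[OF Pf_square Pf2(1) square_le])
  also have "\<dots> = norm2_L2 M f"
    unfolding norm2_L2_eq by (rule Pf2(2))
  finally show "norm2_L2 M (kop P f) \<le> norm2_L2 M f" .
qed

lemma kop_L2_0: "f \<in> L2_0 M \<Longrightarrow> kop P f \<in> L2_0 M"
  using kop_L2(1) kop_integrable(3)[OF L2_integrable] by (simp add: L2_0_def mean_def)

lemma kop_iter_L2_0: "f \<in> L2_0 M \<Longrightarrow> (kop P ^^ n) f \<in> L2_0 M"
  by (induction n) (simp_all add: kop_L2_0)

lemma dirichlet_adjoint:
  assumes adj: "is_L2_adjoint M (kop P) Q" and f: "f \<in> L2 M"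
  shows "dirichlet M (\<lambda>g. Q (kop P g)) f = norm2_L2 M f - norm2_L2 M (kop P f)"
proof -
  have Pf: "kop P f \<in> L2 M"
    by (rule kop_L2(1)[OF f])
  with adj f have QPf: "Q (kop P f) \<in> L2 M"
    and "inner_L2 M (Q (kop P f)) f = norm2_L2 M (kop P f)"
    unfolding is_L2_adjoint_def norm2_L2_def by auto
  moreover have "dirichlet M (\<lambda>g. Q (kop P g)) f = inner_L2 M f f - inner_L2 M (Q (kop P f)) f"
    unfolding dirichlet_def inner_L2_def using integrable_mult_L2[OF f f] integrable_mult_L2[OF QPf f]
    by (simp add: left_diff_distrib)
  ultimately show ?thesis
    by (simp add: norm2_L2_def)
qed

end

locale weak_poincare = invariant_kernel M P + rate_function \<beta>
  for M :: "'a measure" and P :: "'a \<Rightarrow> 'a measure" and \<beta> :: "real \<Rightarrow> real" +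
  fixes Pstar :: "('a \<Rightarrow> real) \<Rightarrow> ('a \<Rightarrow> real)"
    and \<Phi> :: "('a \<Rightarrow> real) \<Rightarrow> ennreal"
    and a :: real
  assumes adjoint: "is_L2_adjoint M (kop P) Pstar"
    and \<Phi>_contr: "\<And>f n. f \<in> L2 M \<Longrightarrow> n \<ge> 1 \<Longrightarrow> \<Phi> ((kop P ^^ n) f) \<le> \<Phi> f"
    and a_def: "ennreal a = (SUP f \<in> {f \<in> L2_0 M. norm2_L2 M f > 0}. ennreal (norm2_L2 M f) / \<Phi> f)"
    and a_pos: "0 < a"
    and WPI: "\<And>f s. f \<in> L2_0 M \<Longrightarrow> s > 0 \<Longrightarrow>
        ennreal (norm2_L2 M f)
          \<le> ennreal (s * dirichlet M (\<lambda>g. Pstar (kop P g)) f) + ennreal (\<beta> s) * \<Phi> f"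
begin

lemma WPI_real:
  assumes f: "f \<in> L2_0 M" and \<Phi>_le: "\<Phi> f \<le> ennreal \<phi>" "0 \<le> \<phi>" and s: "0 < s"
  shows "norm2_L2 M f \<le> s * (norm2_L2 M f - norm2_L2 M (kop P f)) + \<beta> s * \<phi>"
proof -
  define D where "D = norm2_L2 M f - norm2_L2 M (kop P f)"
  have "f \<in> L2 M"
    using f by (simp add: L2_0_def)
  then have D: "dirichlet M (\<lambda>g. Pstar (kop P g)) f = D" "0 \<le> D"
    using dirichlet_adjoint[OF adjoint] kop_L2(2) by (simp_all add: D_def)
  have "ennreal (\<beta> s) * \<Phi> f \<le> ennreal (\<beta> s) * ennreal \<phi>"
    using \<Phi>_le(1) by (rule mult_left_mono) simp
  then have "ennreal (norm2_L2 M f) \<le> ennreal (s * D) + ennreal (\<beta> s) * ennreal \<phi>"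
    using WPI[OF f s] unfolding D(1) by (meson add_left_mono order_trans)
  also have "\<dots> = ennreal (s * D + \<beta> s * \<phi>)"
    using s D(2) nonneg[OF s] \<Phi>_le(2) by (simp add: ennreal_plus ennreal_mult)
  finally show ?thesis
    using s D(2) nonneg[OF s] \<Phi>_le(2) by (subst (asm) ennreal_le_iff) (simp_all add: D_def)
qed

lemma norm2_le_level:
  assumes f: "f \<in> L2_0 M" and \<Phi>f: "\<Phi> f = ennreal \<phi>" "0 < \<phi>"
  shows "norm2_L2 M f \<le> a * \<phi>"
proof (cases "0 < norm2_L2 M f")
  case True
  with f have "ennreal (norm2_L2 M f) / \<Phi> f \<le> ennreal a"
    unfolding a_def by (intro SUP_upper) auto
  with \<Phi>f True a_pos have "norm2_L2 M f / \<phi> \<le> a"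
    by (simp add: divide_ennreal ennreal_le_iff)
  with \<Phi>f show ?thesis
    by (simp add: field_simps)
next
  case False
  moreover have "0 < a * \<phi>"
    using a_pos \<Phi>f(2) by simp
  ultimately show ?thesis
    by linarith
qed

lemma below_level_from_WPI:
  assumes v: "0 < v" "v < a"
  shows "\<exists>s>0. v \<le> \<beta> s"
proof -
  have "ennreal v < ennreal a"
    using v by (simp add: ennreal_lessI)
  then obtain f where f: "f \<in> L2_0 M" "0 < norm2_L2 M f"
    and ratio: "ennreal v < ennreal (norm2_L2 M f) / \<Phi> f"
    unfolding a_def by (auto simp: less_SUP_iff)
  define N where "N = norm2_L2 M f"
  have "ennreal N / \<Phi> f \<le> ennreal a"
    unfolding a_def N_def using f by (intro SUP_upper) auto
  then have "\<Phi> f \<noteq> 0"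
    using f by (auto simp: N_def ennreal_divide_zero top_unique)
  moreover have "\<Phi> f \<noteq> \<top>"
    using ratio by auto
  ultimately obtain \<phi> where \<phi>: "\<Phi> f = ennreal \<phi>" "0 < \<phi>"
    by (cases "\<Phi> f") (auto simp: ennreal_less_zero_iff)
  with ratio f v have "v * \<phi> < N"
    by (simp add: N_def divide_ennreal ennreal_less_iff field_simps)
  define D where "D = N - norm2_L2 M (kop P f)"
  have "0 \<le> D"
    using f kop_L2(2) by (simp add: D_def N_def L2_0_def)
  define s where "s = (N - v * \<phi>) / (D + 1)"
  have s: "0 < s" "s * D < N - v * \<phi>"
    using \<open>v * \<phi> < N\<close> \<open>0 \<le> D\<close> by (simp_all add: s_def field_simps)
  have "N \<le> s * D + \<beta> s * \<phi>"
    using WPI_real[OF f(1) _ _ s(1), of \<phi>] \<phi> by (simp add: N_def D_def)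
  with s \<phi> have "v * \<phi> < \<beta> s * \<phi>"
    by linarith
  with \<phi> s show ?thesis
    by (intro exI[of _ s]) simp
qed

sublocale rate_function_level \<beta> a
  using a_pos below_level_from_WPI by unfold_locales auto

lemma norm2_iter_le_the_inv_F:
  assumes f: "f \<in> L2_0 M" and \<Phi>f: "0 < \<Phi> f" "\<Phi> f < \<infinity>"
  shows "ennreal (norm2_L2 M ((kop P ^^ n) f)) \<le> \<Phi> f * ennreal (the_inv_into {0<..a} (F a) (real n))"
proof -
  obtain \<phi> where \<phi>: "\<Phi> f = ennreal \<phi>" "0 < \<phi>"
    using \<Phi>f by (cases "\<Phi> f") (auto simp: ennreal_less_zero_iff)
  define x where "x k = norm2_L2 M ((kop P ^^ k) f) / \<phi>" for k
  have iter: "(kop P ^^ k) f \<in> L2_0 M" for k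
    using f by (rule kop_iter_L2_0)
  have \<Phi>_iter: "\<Phi> ((kop P ^^ k) f) \<le> ennreal \<phi>" for k
    using \<Phi>_contr[of f k] f \<phi> by (cases k) (auto simp: L2_0_def)
  have "x n \<le> the_inv_into {0<..a} (F a) (real n)"
  proof (rule decay_le_the_inv_F)
    show "0 \<le> x k" for k
      using \<phi> by (simp add: x_def norm2_L2_nonneg)
    show "x 0 \<le> a"
      using norm2_le_level[OF f \<phi>] \<phi> by (simp add: x_def field_simps)
    show "x (Suc k) \<le> x k" for k
      using kop_L2(2)[of "(kop P ^^ k) f"] iter[of k] \<phi>
      by (simp add: x_def L2_0_def divide_right_mono)
    show "Kstar \<beta> (x k) \<le> ennreal (x k - x (Suc k))" for k
    proof (rule Kstar_le_of_bound)
      show "0 \<le> x k - x (Suc k)"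
        using \<open>x (Suc k) \<le> x k\<close> by simp
      fix s :: real assume "0 < s"
      from WPI_real[OF iter \<Phi>_iter _ this] \<phi>
      show "x k \<le> s * (x k - x (Suc k)) + \<beta> s"
        by (simp add: x_def field_simps)
    qed
  qed
  then have "norm2_L2 M ((kop P ^^ n) f) \<le> \<phi> * the_inv_into {0<..a} (F a) (real n)"
    using \<phi> by (simp add: x_def field_simps)
  with \<phi> the_inv_F(1)[of "real n"] show ?thesis
    by (simp add: ennreal_mult[symmetric])
qed

end

theorem theorem8:
  fixes M :: "'a measure" and P :: "'a \<Rightarrow> 'a measure"
    and Pstar :: "('a \<Rightarrow> real) \<Rightarrow> ('a \<Rightarrow> real)"
    and \<Phi> :: "('a \<Rightarrow> real) \<Rightarrow> ennreal"
    and \<beta> :: "real \<Rightarrow> real" and a :: real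
  assumes M: "prob_space M"
    and P: "invariant_markov_kernel M P"
    and Pstar: "is_L2_adjoint M (kop P) Pstar"
    and \<Phi>_ae: "\<And>f g. f \<in> L2 M \<Longrightarrow> g \<in> L2 M \<Longrightarrow> (AE x in M. f x = g x) \<Longrightarrow> \<Phi> f = \<Phi> g"
    and \<Phi>_hom: "\<And>f c. f \<in> L2 M \<Longrightarrow> c > 0 \<Longrightarrow> \<Phi> (\<lambda>x. c * f x) = ennreal (c\<^sup>2) * \<Phi> f"
    and \<Phi>_contr: "\<And>f n. f \<in> L2 M \<Longrightarrow> n \<ge> 1 \<Longrightarrow> \<Phi> ((kop P ^^ n) f) \<le> \<Phi> f"
    and a_def: "ennreal a = (SUP f \<in> {f \<in> L2_0 M. norm2_L2 M f > 0}. ennreal (norm2_L2 M f) / \<Phi> f)"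
    and a_pos: "0 < a"
    and \<Phi>_poinc: "\<And>f. f \<in> L2 M \<Longrightarrow>
        ennreal (norm2_L2 M (\<lambda>x. f x - mean M f)) \<le> ennreal a * \<Phi> (\<lambda>x. f x - mean M f)"
    and \<beta>_nonneg: "\<And>s. s > 0 \<Longrightarrow> \<beta> s \<ge> 0"
    and \<beta>_decr: "\<And>s t. 0 < s \<Longrightarrow> s \<le> t \<Longrightarrow> \<beta> t \<le> \<beta> s"
    and \<beta>_lim: "(\<beta> \<longlongrightarrow> 0) at_top"
    and WPI: "\<And>f s. f \<in> L2_0 M \<Longrightarrow> s > 0 \<Longrightarrow>
        ennreal (norm2_L2 M f)
          \<le> ennreal (s * dirichlet M (\<lambda>g. Pstar (kop P g)) f) + ennreal (\<beta> s) * \<Phi> f"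
  shows "continuous_on {0<..a} (\<lambda>x. enn2real (Fa \<beta> a x))
    \<and> (\<forall>x \<in> {0<..a}. Fa \<beta> a x < \<infinity>)
    \<and> convex_on {0<..a} (\<lambda>x. enn2real (Fa \<beta> a x))
    \<and> (\<forall>x y. 0 < x \<longrightarrow> x < y \<longrightarrow> y \<le> a \<longrightarrow> enn2real (Fa \<beta> a y) < enn2real (Fa \<beta> a x))
    \<and> ((Fa \<beta> a) \<longlongrightarrow> \<infinity>) (at_right 0)
    \<and> (\<forall>t > 0. \<exists>!x \<in> {0<..<a}. enn2real (Fa \<beta> a x) = t)
    \<and> (\<forall>f n. f \<in> L2_0 M \<longrightarrow> 0 < \<Phi> f \<longrightarrow> \<Phi> f < \<infinity> \<longrightarrow> n \<ge> 1 \<longrightarrow>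
         ennreal (norm2_L2 M ((kop P ^^ n) f))
           \<le> \<Phi> f * ennreal (the_inv_into {0<..a} (\<lambda>x. enn2real (Fa \<beta> a x)) (real n)))"
proof -
  interpret weak_poincare M P \<beta> Pstar \<Phi> a
    by (intro weak_poincare.intro invariant_kernel.intro rate_function.intro weak_poincare_axioms.intro)
      (fact M P Pstar \<Phi>_contr a_def a_pos \<beta>_nonneg \<beta>_decr \<beta>_lim WPI)+
  show ?thesis
    using F_continuous_on F_convex_on F_strict_antimono Fa_tendsto_top F_unique_preimage norm2_iter_le_the_inv_F
    by (auto simp: Fa_less_top)
qed

end
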